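(* Let $P,Q,R_0,R_1$ be integers with $PQ\ne0$, $\Delta:=P^2-4Q\neq0$, $|R_0|+|R_1|>0$, $\gcd(P,Q)=\gcd(R_1,Q)=1$, such that $\alpha/\beta$ is not a root of unity, where $\alpha,\beta$ are the roots of $x^2-Px+Q$. Let $R_{n+2}=PR_{n+1}-QR_n$ ($n\ge0$) and $U_n=(\alpha^n-\beta^n)/(\alpha-\beta)$. Let $n,k$ be positive integers with $n\ge k$ and $n\ge2$, and suppose $R_k,R_{k+1},\dots,R_n$ are all nonzero. If $R_0\ne0$, then \[\frac{R_0^{\,n-k}}{R_kR_{k+1}\cdots R_n}=\sum_{j=k}^{n}\frac{(-1)^{n-j}U_j^{\,n-k}}{Q^{f(j,k,n)}[j-k]_{\boldsymbol U}!\,[n-j]_{\boldsymbol U}!}\cdot\frac1{R_j}.\] If $R_1\ne0$, then \[\frac{R_1^{\,n-k}}{R_kR_{k+1}\cdots R_n}=\sum_{j=k}^{n}\frac{(-1)^{n-j}U_{j-1}^{\,n-k}}{Q^{f(j,k,n)-(n-k)}[j-k]_{\boldsymbol U}!\,[n-j]_{\boldsymbol U}!}\cdot\frac1{R_j}.\]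
   Context: $U_0=0,U_1=1,U_{n+2}=PU_{n+1}-QU_n$; $[j]_{\boldsymbol U}!:=U_1\cdots U_j$ with $[0]_{\boldsymbol U}!=1$. For $k\le j\le n$, $f(j,k,n):=\sum_{k\le i\le n,\ i\ne j}\min(i,j)$. *)

theory Defs
  imports Complex_Main
begin

fun lseq :: "int \<Rightarrow> int \<Rightarrow> int \<Rightarrow> int \<Rightarrow> nat \<Rightarrow> int" where
  "lseq P Q a b 0 = a"
| "lseq P Q a b (Suc 0) = b"
| "lseq P Q a b (Suc (Suc n)) = P * lseq P Q a b (Suc n) - Q * lseq P Q a b n"

definition U :: "int \<Rightarrow> int \<Rightarrow> nat \<Rightarrow> int" where
  "U P Q n = lseq P Q 0 1 n"

definition Ufact :: "int \<Rightarrow> int \<Rightarrow> nat \<Rightarrow> int" where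
  "Ufact P Q j = (\<Prod>i=1..j. U P Q i)"

definition fjkn :: "nat \<Rightarrow> nat \<Rightarrow> nat \<Rightarrow> nat" where
  "fjkn j k n = (\<Sum>i\<in>{k..n} - {j}. min i j)"

end

theory Submission
  imports Defs "HOL-Computational_Algebra.Polynomial"
begin

(* For i >= 1 one has R_i = U_i R_1 - Q U_(i-1) R_0, so R_i is the value at (x, y) = (R_1, R_0)
   of the linear form a_i x - b_i y with (a_i, b_i) = (U_i, Q U_(i-1)).  Lagrange interpolation
   of t^r at the m + 1 = n - k + 1 points b_i / a_i, written homogeneously and divided by the
   product of the R_i, gives a partial fraction expansion of R_1^r R_0^(m-r) / (R_k ... R_n)
   whose coefficients involve the determinants a_i b_j - a_j b_i.  By d'Ocagne's identity these
   are -Q^j U_(i-j) for j < i and Q^i U_(j-i) for i < j, so their product over i <> j is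
   (-1)^(n-j) Q^f(j,k,n) [j-k]_U! [n-j]_U!.  The cases r = 0 and r = m are the two identities.
   The points are finite and distinct because Q <> 0 and no U_i (i >= 1) vanishes, the latter
   by the Binet formula since alpha/beta is not a root of unity. *)

lemma degree_prod_linear_le: "degree (\<Prod>i\<in>T. [:c i, a i:]) \<le> card T"
proof (cases "finite T")
  case True
  have "degree (\<Prod>i\<in>T. [:c i, a i:]) \<le> (\<Sum>i\<in>T. degree [:c i, a i:])"
    using degree_prod_sum_le[OF True, of "\<lambda>i. [:c i, a i:]"] by (simp only: comp_def)
  also have "\<dots> \<le> (\<Sum>i\<in>T. 1)" by (intro sum_mono) simp
  finally show ?thesis by simp
qed simp

lemma coeff_prod_linear_card:
  fixes a c :: "'a \<Rightarrow> 'b::comm_ring_1"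
  assumes "finite T"
  shows "coeff (\<Prod>i\<in>T. [:c i, a i:]) (card T) = (\<Prod>i\<in>T. a i)"
  using assms
proof (induction T rule: finite_induct)
  case (insert x T)
  have "coeff (\<Prod>i\<in>T. [:c i, a i:]) (Suc (card T)) = 0"
    using degree_prod_linear_le[of c a T] by (intro coeff_eq_0) simp
  with insert show ?case by simp
qed simp

lemma lagrange_interpolation_monom:
  fixes a b :: "'a \<Rightarrow> 'b::field"
  assumes S: "finite S" and a_nz: "\<And>i. i \<in> S \<Longrightarrow> a i \<noteq> 0"
    and distinct: "\<And>i j. i \<in> S \<Longrightarrow> j \<in> S \<Longrightarrow> i \<noteq> j \<Longrightarrow> a i * b j \<noteq> a j * b i"
    and r: "r < card S"
  shows "(\<Sum>j\<in>S. smult (a j ^ (card S - 1 - r) * b j ^ r / (\<Prod>i\<in>S-{j}. a i * b j - a j * b i))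
            (\<Prod>i\<in>S-{j}. [:- b i, a i:])) = monom 1 r" (is "?p = _")
proof (rule poly_eqI_degree[where A = "(\<lambda>l. b l / a l) ` S"])
  define m where "m = card S - 1"
  define w where "w j = a j ^ (m - r) * b j ^ r / (\<Prod>i\<in>S-{j}. a i * b j - a j * b i)" for j
  have card_S: "card S = Suc m"
    using r by (simp add: m_def)
  have "inj_on (\<lambda>l. b l / a l) S"
    using a_nz distinct by (intro inj_onI) (metis frac_eq_eq mult.commute)
  then have card_points: "card ((\<lambda>l. b l / a l) ` S) = card S"
    by (rule card_image)
  have "degree ?p \<le> m"
  proof (intro degree_sum_le[OF S] order.trans[OF degree_smult_le])
    fix j assume "j \<in> S"
    then show "degree (\<Prod>i\<in>S-{j}. [:- b i, a i:]) \<le> m"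
      using degree_prod_linear_le[of "\<lambda>i. - b i" a "S - {j}"] S card_S by simp
  qed
  then show "degree ?p < card ((\<lambda>l. b l / a l) ` S)"
    using card_points card_S by simp
  show "degree (monom (1::'b) r) < card ((\<lambda>l. b l / a l) ` S)"
    using card_points r by (simp add: degree_monom_eq)
  fix x assume "x \<in> (\<lambda>l. b l / a l) ` S"
  then obtain l where l: "l \<in> S" and x: "x = b l / a l" by blast
  have vanish: "(\<Prod>i\<in>S-{j}. a i * x - b i) = 0" if "j \<in> S" "j \<noteq> l" for j
    using S l that a_nz[OF l] by (intro prod_zero bexI[of _ l]) (auto simp: x)
  have "poly ?p x = (\<Sum>j\<in>S. w j * (\<Prod>i\<in>S-{j}. a i * x - b i))"
    by (simp add: poly_sum poly_prod w_def m_def algebra_simps)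
  also have "\<dots> = w l * (\<Prod>i\<in>S-{l}. a i * x - b i)"
    using vanish by (simp add: sum.remove[OF S l] sum.neutral)
  also have "(\<Prod>i\<in>S-{l}. a i * x - b i) = (\<Prod>i\<in>S-{l}. a i * b l - a l * b i) / a l ^ m"
    using S l card_S a_nz[OF l] by (simp add: x prod_dividef field_simps)
  also have "w l * \<dots> = a l ^ (m - r) * b l ^ r / a l ^ m"
    using S l distinct by (simp add: w_def prod_zero_iff)
  also have "\<dots> = x ^ r"
    using r card_S a_nz[OF l] by (simp add: x power_divide power_diff)
  finally show "poly ?p x = poly (monom 1 r) x"
    by (simp add: poly_monom)
qed

lemma lagrange_interpolation_homogeneous:
  fixes a b :: "'a \<Rightarrow> 'b::field"
  assumes S: "finite S" and "\<And>i. i \<in> S \<Longrightarrow> a i \<noteq> 0"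
    and "\<And>i j. i \<in> S \<Longrightarrow> j \<in> S \<Longrightarrow> i \<noteq> j \<Longrightarrow> a i * b j \<noteq> a j * b i"
    and r: "r < card S"
  shows "(\<Sum>j\<in>S. a j ^ (card S - 1 - r) * b j ^ r / (\<Prod>i\<in>S-{j}. a i * b j - a j * b i)
            * (\<Prod>i\<in>S-{j}. a i * x - b i * y)) = x ^ r * y ^ (card S - 1 - r)"
proof -
  define m where "m = card S - 1"
  define w where "w j = a j ^ (m - r) * b j ^ r / (\<Prod>i\<in>S-{j}. a i * b j - a j * b i)" for j
  define p where "p = (\<Sum>j\<in>S. smult (w j) (\<Prod>i\<in>S-{j}. [:- b i, a i:]))"
  have p: "p = monom 1 r"
    using lagrange_interpolation_monom[OF assms] by (simp add: p_def w_def m_def)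
  have card_remove: "card (S - {j}) = m" if "j \<in> S" for j
    using S that by (simp add: m_def)
  have "(\<Sum>j\<in>S. w j * (\<Prod>i\<in>S-{j}. a i * x - b i * y)) = x ^ r * y ^ (m - r)"
  proof (cases "y = 0")
    case True
    have "(\<Sum>j\<in>S. w j * (\<Prod>i\<in>S-{j}. a i * x - b i * y)) = x ^ m * coeff p m"
      unfolding p_def coeff_sum sum_distrib_left
    proof (intro sum.cong refl)
      fix j assume "j \<in> S"
      then show "w j * (\<Prod>i\<in>S-{j}. a i * x - b i * y)
                 = x ^ m * coeff (smult (w j) (\<Prod>i\<in>S-{j}. [:- b i, a i:])) m"
        using coeff_prod_linear_card[of "S - {j}" "\<lambda>i. - b i" a] S card_remove True
        by (simp add: prod.distrib)
    qed
    moreover have "0 ^ (m - r) = (0::'b)" if "r \<noteq> m"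
      using that r by (simp add: m_def)
    ultimately show ?thesis
      using True by (simp add: p)
  next
    case False
    have "(\<Sum>j\<in>S. w j * (\<Prod>i\<in>S-{j}. a i * x - b i * y)) = y ^ m * poly p (x / y)"
      unfolding p_def poly_sum sum_distrib_left
    proof (intro sum.cong refl)
      fix j assume "j \<in> S"
      have "a i * x - b i * y = y * (- b i + x / y * a i)" for i
        using False by (simp add: field_simps)
      with \<open>j \<in> S\<close> show "w j * (\<Prod>i\<in>S-{j}. a i * x - b i * y)
                 = y ^ m * poly (smult (w j) (\<Prod>i\<in>S-{j}. [:- b i, a i:])) (x / y)"
        using S card_remove by (simp add: prod.distrib poly_prod)
    qed
    with False r show ?thesis
      by (simp add: p poly_monom m_def power_divide power_diff)
  qed
  then show ?thesis
    by (simp add: w_def m_def)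
qed

lemma lagrange_partial_fractions:
  fixes a b :: "'a \<Rightarrow> 'b::field"
  assumes S: "finite S" and a_nz: "\<And>i. i \<in> S \<Longrightarrow> a i \<noteq> 0"
    and distinct: "\<And>i j. i \<in> S \<Longrightarrow> j \<in> S \<Longrightarrow> i \<noteq> j \<Longrightarrow> a i * b j \<noteq> a j * b i"
    and r: "r < card S"
    and nz: "\<And>i. i \<in> S \<Longrightarrow> a i * x - b i * y \<noteq> 0"
  shows "x ^ r * y ^ (card S - 1 - r) / (\<Prod>i\<in>S. a i * x - b i * y)
       = (\<Sum>j\<in>S. a j ^ (card S - 1 - r) * b j ^ r / (\<Prod>i\<in>S-{j}. a i * b j - a j * b i)
                  / (a j * x - b j * y))"
proof -
  have interpolation: "(\<Sum>j\<in>S. a j ^ (card S - 1 - r) * b j ^ r / (\<Prod>i\<in>S-{j}. a i * b j - a j * b i)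
            * (\<Prod>i\<in>S-{j}. a i * x - b i * y)) = x ^ r * y ^ (card S - 1 - r)"
    using S a_nz distinct r by (rule lagrange_interpolation_homogeneous)
  have "x ^ r * y ^ (card S - 1 - r) / (\<Prod>i\<in>S. a i * x - b i * y)
      = (\<Sum>j\<in>S. a j ^ (card S - 1 - r) * b j ^ r / (\<Prod>i\<in>S-{j}. a i * b j - a j * b i)
                  * (\<Prod>i\<in>S-{j}. a i * x - b i * y) / (\<Prod>i\<in>S. a i * x - b i * y))"
    unfolding interpolation[symmetric] by (rule sum_divide_distrib)
  also have "\<dots> = (\<Sum>j\<in>S. a j ^ (card S - 1 - r) * b j ^ r / (\<Prod>i\<in>S-{j}. a i * b j - a j * b i)
                  / (a j * x - b j * y))"
  proof (intro sum.cong refl)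
    fix j assume j: "j \<in> S"
    have "(\<Prod>i\<in>S. a i * x - b i * y) = (a j * x - b j * y) * (\<Prod>i\<in>S-{j}. a i * x - b i * y)"
      by (rule prod.remove[OF S j])
    moreover have "(\<Prod>i\<in>S-{j}. a i * x - b i * y) \<noteq> 0"
      using S nz by (simp add: prod_zero_iff)
    ultimately show "a j ^ (card S - 1 - r) * b j ^ r / (\<Prod>i\<in>S-{j}. a i * b j - a j * b i)
                     * (\<Prod>i\<in>S-{j}. a i * x - b i * y) / (\<Prod>i\<in>S. a i * x - b i * y)
                   = a j ^ (card S - 1 - r) * b j ^ r / (\<Prod>i\<in>S-{j}. a i * b j - a j * b i)
                     / (a j * x - b j * y)"
      by simp
  qed
  finally show ?thesis .
qed

lemma U_0 [simp]: "U P Q 0 = 0"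
  and U_1 [simp]: "U P Q (Suc 0) = 1"
  and U_Suc_Suc: "U P Q (Suc (Suc n)) = P * U P Q (Suc n) - Q * U P Q n"
  by (simp_all add: U_def)

lemma lseq_Suc_eq_U: "lseq P Q R0 R1 (Suc n) = U P Q (Suc n) * R1 - Q * U P Q n * R0"
proof (induction n rule: induct_nat_012)
  case (ge2 n)
  show ?case
    unfolding lseq.simps(3)[of P Q R0 R1 "Suc n"] ge2 by (simp add: U_Suc_Suc algebra_simps)
qed (simp_all add: U_Suc_Suc)

lemma U_binet:
  fixes \<alpha> \<beta> :: "'a::comm_ring_1"
  assumes "\<alpha> + \<beta> = of_int P" and "\<alpha> * \<beta> = of_int Q"
  shows "of_int (U P Q n) * (\<alpha> - \<beta>) = \<alpha> ^ n - \<beta> ^ n"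
proof (induction n rule: induct_nat_012)
  case (ge2 n)
  have "of_int (U P Q (Suc (Suc n))) * (\<alpha> - \<beta>)
      = (\<alpha> + \<beta>) * (of_int (U P Q (Suc n)) * (\<alpha> - \<beta>)) - \<alpha> * \<beta> * (of_int (U P Q n) * (\<alpha> - \<beta>))"
    by (simp add: U_Suc_Suc assms algebra_simps)
  also have "\<dots> = \<alpha> ^ Suc (Suc n) - \<beta> ^ Suc (Suc n)"
    by (simp only: ge2) (simp add: algebra_simps)
  finally show ?case .
qed simp_all

lemma U_nonzero:
  fixes \<alpha> \<beta> :: "'a::field"
  assumes "\<alpha> + \<beta> = of_int P" and "\<alpha> * \<beta> = of_int Q"
    and "\<beta> \<noteq> 0" and "(\<alpha> / \<beta>) ^ n \<noteq> 1"
  shows "U P Q n \<noteq> 0"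
  using U_binet[OF assms(1,2), of n] assms(3,4) by (auto simp: power_divide)

lemma U_dOcagne: "U P Q (Suc i) * U P Q (i + d) - U P Q (Suc (i + d)) * U P Q i = Q ^ i * U P Q d"
proof (induction i)
  case (Suc i)
  have "U P Q (Suc (Suc i)) * U P Q (Suc i + d) - U P Q (Suc (Suc i + d)) * U P Q (Suc i)
      = Q * (U P Q (Suc i) * U P Q (i + d) - U P Q (Suc (i + d)) * U P Q i)"
    by (simp add: U_Suc_Suc algebra_simps)
  with Suc show ?case by simp
qed simp

(* a_i b_j - a_j b_i for the coefficients (a_i, b_i) = (U_i, Q U_(i-1)) of R_i = a_i R_1 - b_i R_0 *)
definition Ucross :: "int \<Rightarrow> int \<Rightarrow> nat \<Rightarrow> nat \<Rightarrow> int" where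
  "Ucross P Q i j = U P Q i * (Q * U P Q (j - 1)) - U P Q j * (Q * U P Q (i - 1))"

lemma Ucross_antisym: "Ucross P Q i j = - Ucross P Q j i"
  by (simp add: Ucross_def)

lemma Ucross_eq:
  assumes "0 < i" and "i \<le> j"
  shows "Ucross P Q i j = Q ^ i * U P Q (j - i)"
proof -
  define i' d where "i' = i - 1" and "d = j - i"
  have i: "i = Suc i'" and j: "j = Suc (i' + d)"
    using assms by (simp_all add: i'_def d_def)
  have "Ucross P Q i j = Q * (U P Q (Suc i') * U P Q (i' + d) - U P Q (Suc (i' + d)) * U P Q i')"
    by (simp add: Ucross_def i j algebra_simps)
  also have "\<dots> = Q ^ i * U P Q (j - i)"
    by (simp add: U_dOcagne i j)
  finally show ?thesis .
qed

lemma Ucross_nonzero: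
  assumes "Q \<noteq> 0" and U_nz: "\<And>i. 0 < i \<Longrightarrow> U P Q i \<noteq> 0"
    and "0 < i" and "0 < j" and "i \<noteq> j"
  shows "Ucross P Q i j \<noteq> 0"
proof (cases "i < j")
  case True
  then show ?thesis
    using assms U_nz[of "j - i"] by (simp add: Ucross_eq)
next
  case False
  then show ?thesis
    using assms U_nz[of "i - j"] by (subst Ucross_antisym) (simp add: Ucross_eq)
qed

lemma Ufact_eq_prod_below: "k \<le> j \<Longrightarrow> Ufact P Q (j - k) = (\<Prod>i=k..<j. U P Q (j - i))"
  unfolding Ufact_def
  by (rule prod.reindex_bij_witness[where i = "\<lambda>i. j - i" and j = "\<lambda>d. j - d"]) auto

lemma Ufact_eq_prod_above: "Ufact P Q (n - j) = (\<Prod>i\<in>{j<..n}. U P Q (i - j))"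
  unfolding Ufact_def
  by (rule prod.reindex_bij_witness[where i = "\<lambda>i. i - j" and j = "\<lambda>d. d + j"]) auto

lemma fjkn_eq:
  assumes "j \<in> {k..n}"
  shows "fjkn j k n = (\<Sum>i=k..<j. i) + j * (n - j)"
proof -
  have "fjkn j k n = (\<Sum>i=k..<j. min i j) + (\<Sum>i\<in>{j<..n}. min i j)"
    unfolding fjkn_def using assms by (subst sum.union_disjoint[symmetric]) (auto intro: sum.cong)
  then show ?thesis
    by simp
qed

lemma fjkn_ge:
  assumes "0 < k" and "j \<in> {k..n}"
  shows "n - k \<le> fjkn j k n"
proof -
  have "n - k = (\<Sum>i\<in>{k..n} - {j}. 1)"
    using assms by simp
  also have "\<dots> \<le> fjkn j k n"
    unfolding fjkn_def using assms by (intro sum_mono) auto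
  finally show ?thesis .
qed

lemma prod_Ucross:
  assumes "0 < k" and j: "j \<in> {k..n}"
  shows "(\<Prod>i\<in>{k..n}-{j}. Ucross P Q i j)
         = (-1) ^ (n - j) * Q ^ fjkn j k n * Ufact P Q (j - k) * Ufact P Q (n - j)"
proof -
  have below: "(\<Prod>i=k..<j. Ucross P Q i j) = Q ^ (\<Sum>i=k..<j. i) * Ufact P Q (j - k)"
  proof -
    have "(\<Prod>i=k..<j. Ucross P Q i j) = (\<Prod>i=k..<j. Q ^ i * U P Q (j - i))"
      using assms by (intro prod.cong refl Ucross_eq) auto
    then show ?thesis
      using j by (simp add: prod.distrib power_sum Ufact_eq_prod_below)
  qed
  have above: "(\<Prod>i\<in>{j<..n}. Ucross P Q i j) = (-1) ^ (n - j) * Q ^ (j * (n - j)) * Ufact P Q (n - j)"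
  proof -
    have "(\<Prod>i\<in>{j<..n}. Ucross P Q i j) = (\<Prod>i\<in>{j<..n}. - 1 * Q ^ j * U P Q (i - j))"
      using assms by (intro prod.cong refl) (simp add: Ucross_antisym[of P Q _ j] Ucross_eq)
    also have "\<dots> = (\<Prod>i\<in>{j<..n}. - 1) * (\<Prod>i\<in>{j<..n}. Q ^ j) * (\<Prod>i\<in>{j<..n}. U P Q (i - j))"
      by (simp only: prod.distrib)
    finally show ?thesis
      by (simp add: power_mult Ufact_eq_prod_above)
  qed
  have parts: "{k..n} - {j} = {k..<j} \<union> {j<..n}"
    using j by auto
  have "(\<Prod>i\<in>{k..n}-{j}. Ucross P Q i j) = (\<Prod>i=k..<j. Ucross P Q i j) * (\<Prod>i\<in>{j<..n}. Ucross P Q i j)"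
    unfolding parts by (rule prod.union_disjoint) auto
  then show ?thesis
    unfolding below above fjkn_eq[OF j] power_add by (simp add: algebra_simps)
qed

lemma lseq_partial_fractions:
  fixes P Q R0 R1 :: int
  assumes Q: "Q \<noteq> 0" and U_nz: "\<And>i. 0 < i \<Longrightarrow> U P Q i \<noteq> 0"
    and k: "0 < k" "k \<le> n" and R_nz: "\<And>i. i \<in> {k..n} \<Longrightarrow> lseq P Q R0 R1 i \<noteq> 0"
    and r: "r \<le> n - k"
  shows "real_of_int R1 ^ r * real_of_int R0 ^ (n - k - r) / (\<Prod>i=k..n. real_of_int (lseq P Q R0 R1 i))
       = (\<Sum>j=k..n. (-1) ^ (n - j) * real_of_int (U P Q j) ^ (n - k - r) * real_of_int (Q * U P Q (j - 1)) ^ r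
            / (real_of_int Q ^ fjkn j k n * real_of_int (Ufact P Q (j - k)) * real_of_int (Ufact P Q (n - j)))
            / real_of_int (lseq P Q R0 R1 j))" (is "_ = sum ?summand _")
proof -
  define a where "a i = real_of_int (U P Q i)" for i
  define b where "b i = real_of_int (Q * U P Q (i - 1))" for i
  have card: "card {k..n} - 1 = n - k"
    by simp
  have lseq_ab: "real_of_int (lseq P Q R0 R1 i) = a i * real_of_int R1 - b i * real_of_int R0"
    if "i \<in> {k..n}" for i
    using lseq_Suc_eq_U[of P Q R0 R1 "i - 1"] that k by (simp add: a_def b_def)
  have R_ab_nz: "a i * real_of_int R1 - b i * real_of_int R0 \<noteq> 0" if "i \<in> {k..n}" for i
    using lseq_ab[OF that] R_nz[OF that] by simp
  have cross: "a i * b j - a j * b i = real_of_int (Ucross P Q i j)" for i j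
    by (simp add: a_def b_def Ucross_def)
  have cross_nz: "a i * b j \<noteq> a j * b i" if "i \<in> {k..n}" "j \<in> {k..n}" "i \<noteq> j" for i j
    using Ucross_nonzero[OF Q U_nz, of i j] cross[of i j] that k by auto
  have "real_of_int R1 ^ r * real_of_int R0 ^ (n - k - r)
        / (\<Prod>i\<in>{k..n}. a i * real_of_int R1 - b i * real_of_int R0)
      = (\<Sum>j\<in>{k..n}. a j ^ (n - k - r) * b j ^ r / (\<Prod>i\<in>{k..n}-{j}. a i * b j - a j * b i)
            / (a j * real_of_int R1 - b j * real_of_int R0))"
    unfolding card[symmetric]
    by (rule lagrange_partial_fractions) (use U_nz k r cross_nz R_ab_nz in \<open>auto simp: a_def\<close>)
  also have "(\<Prod>i\<in>{k..n}. a i * real_of_int R1 - b i * real_of_int R0)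
      = (\<Prod>i=k..n. real_of_int (lseq P Q R0 R1 i))"
    by (intro prod.cong) (simp_all add: lseq_ab)
  also have "(\<Sum>j\<in>{k..n}. a j ^ (n - k - r) * b j ^ r / (\<Prod>i\<in>{k..n}-{j}. a i * b j - a j * b i)
            / (a j * real_of_int R1 - b j * real_of_int R0))
      = (\<Sum>j=k..n. a j ^ (n - k - r) * b j ^ r / (\<Prod>i\<in>{k..n}-{j}. a i * b j - a j * b i)
            / real_of_int (lseq P Q R0 R1 j))"
    by (intro sum.cong) (simp_all add: lseq_ab)
  also have "\<dots> = sum ?summand {k..n}"
  proof (intro sum.cong refl)
    fix j assume j: "j \<in> {k..n}"
    have "(\<Prod>i\<in>{k..n}-{j}. a i * b j - a j * b i)
        = (-1) ^ (n - j) * real_of_int (Q ^ fjkn j k n * Ufact P Q (j - k) * Ufact P Q (n - j))"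
      unfolding cross of_int_prod[symmetric] prod_Ucross[OF k(1) j] by simp
    then show "a j ^ (n - k - r) * b j ^ r / (\<Prod>i\<in>{k..n}-{j}. a i * b j - a j * b i)
            / real_of_int (lseq P Q R0 R1 j) = ?summand j"
      by (cases "even (n - j)") (simp_all add: a_def b_def)
  qed
  finally show ?thesis .
qed

theorem lemma5:
  fixes P Q R0 R1 :: int and \<alpha> \<beta> :: complex and n k :: nat
  assumes PQ: "P * Q \<noteq> 0"
    and disc: "P^2 - 4*Q \<noteq> 0"
    and R01: "\<bar>R0\<bar> + \<bar>R1\<bar> > 0"
    and g1: "gcd P Q = 1" and g2: "gcd R1 Q = 1"
    and roots: "\<alpha> + \<beta> = of_int P" "\<alpha> * \<beta> = of_int Q"
    and nru: "\<not> (\<exists>m::nat. m > 0 \<and> (\<alpha> / \<beta>) ^ m = 1)"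
    and k: "k \<ge> 1" and nk: "n \<ge> k" and n2: "n \<ge> 2"
    and Rnz: "\<forall>i\<in>{k..n}. lseq P Q R0 R1 i \<noteq> 0"
  shows "(R0 \<noteq> 0 \<longrightarrow>
           real_of_int R0 ^ (n - k) / (\<Prod>i=k..n. real_of_int (lseq P Q R0 R1 i)) =
           (\<Sum>j=k..n. (-1) ^ (n - j) * real_of_int (U P Q j) ^ (n - k) /
              (real_of_int Q ^ fjkn j k n * real_of_int (Ufact P Q (j - k)) * real_of_int (Ufact P Q (n - j)))
              * (1 / real_of_int (lseq P Q R0 R1 j))))
       \<and> (R1 \<noteq> 0 \<longrightarrow>
           real_of_int R1 ^ (n - k) / (\<Prod>i=k..n. real_of_int (lseq P Q R0 R1 i)) =
           (\<Sum>j=k..n. (-1) ^ (n - j) * real_of_int (U P Q (j - 1)) ^ (n - k) /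
              (real_of_int Q ^ (fjkn j k n - (n - k)) * real_of_int (Ufact P Q (j - k)) * real_of_int (Ufact P Q (n - j)))
              * (1 / real_of_int (lseq P Q R0 R1 j))))"
proof -
  let "(_ \<longrightarrow> ?R0_case) \<and> (_ \<longrightarrow> ?R1_lhs = ?R1_rhs)" = ?thesis
  have Q: "Q \<noteq> 0"
    using PQ by simp
  have \<beta>: "\<beta> \<noteq> 0"
    using roots(2) Q by auto
  have U_nz: "U P Q i \<noteq> 0" if "0 < i" for i
    by (rule U_nonzero[OF roots \<beta>]) (use nru that in blast)
  have k0: "0 < k"
    using k by simp
  note partial_fractions = lseq_partial_fractions[OF Q U_nz k0 nk, of R0 R1]
  have Q_split: "real_of_int Q ^ fjkn j k n
      = real_of_int Q ^ (fjkn j k n - (n - k)) * real_of_int Q ^ (n - k)" if "j \<in> {k..n}" for j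
    using fjkn_ge[OF k0 that] by (metis le_add_diff_inverse2 power_add)
  have R0_case: ?R0_case
    using partial_fractions[of 0] Rnz by simp
  have "?R1_lhs =
      (\<Sum>j=k..n. (-1) ^ (n - j) * real_of_int (Q * U P Q (j - 1)) ^ (n - k)
            / (real_of_int Q ^ fjkn j k n * real_of_int (Ufact P Q (j - k)) * real_of_int (Ufact P Q (n - j)))
            / real_of_int (lseq P Q R0 R1 j))"
    using partial_fractions[of "n - k"] Rnz by simp
  also have "\<dots> = ?R1_rhs"
    using Q by (intro sum.cong refl) (simp add: Q_split power_mult_distrib)
  finally show ?thesis
    using R0_case by blast
qed

end
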